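(* For every integer $r\geq 3$ and every integer $n>6^r$, there exists a collection of $n$ matchings, each of size $n+\frac{1}{12r}n^{\frac{r-1}{r}}-1$, in an $r$-partite $r$-uniform hypergraph that does not admit a rainbow matching of size $n$.
   Context: A hypergraph is $r$-uniform if every edge contains exactly $r$ vertices. An $r$-uniform hypergraph is $r$-partite if its vertex set can be partitioned into $r$ sets $V_1,\dots,V_r$ such that every edge contains exactly one vertex from each $V_i$. A matching is a set of pairwise vertex-disjoint edges. Given a collection (repetitions allowed) of matchings $M_1,\dots,M_n$ in a hypergraph, a matching $M\subseteq \bigcup_{i=1}^n M_i$ is rainbow if there is an injection $\phi:M\to[n]$ such that every edge $e\in M$ belongs to $M_{\phi(e)}$. *)

theory Defs
  imports Complex_Main
begin

definition hypergraph :: "'a set \<Rightarrow> 'a set set \<Rightarrow> bool" where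
  "hypergraph V E \<longleftrightarrow> finite V \<and> (\<forall>e\<in>E. e \<subseteq> V)"

definition r_uniform :: "nat \<Rightarrow> 'a set set \<Rightarrow> bool" where
  "r_uniform r E \<longleftrightarrow> (\<forall>e\<in>E. finite e \<and> card e = r)"

definition r_partite :: "nat \<Rightarrow> 'a set \<Rightarrow> 'a set set \<Rightarrow> bool" where
  "r_partite r V E \<longleftrightarrow> (\<exists>P :: nat \<Rightarrow> 'a set.
      V = (\<Union>i\<in>{1..r}. P i) \<and>
      (\<forall>i\<in>{1..r}. \<forall>j\<in>{1..r}. i \<noteq> j \<longrightarrow> P i \<inter> P j = {}) \<and>
      (\<forall>e\<in>E. \<forall>i\<in>{1..r}. card (e \<inter> P i) = 1))"

definition matching :: "'a set set \<Rightarrow> 'a set set \<Rightarrow> bool" where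
  "matching E M \<longleftrightarrow> M \<subseteq> E \<and> (\<forall>e\<in>M. \<forall>f\<in>M. e \<noteq> f \<longrightarrow> e \<inter> f = {})"

definition rainbow_matching :: "(nat \<Rightarrow> 'a set set) \<Rightarrow> nat \<Rightarrow> 'a set set \<Rightarrow> bool" where
  "rainbow_matching Ms n M \<longleftrightarrow>
     M \<subseteq> (\<Union>i\<in>{1..n}. Ms i) \<and> (\<forall>e\<in>M. \<forall>f\<in>M. e \<noteq> f \<longrightarrow> e \<inter> f = {}) \<and>
     (\<exists>\<phi>. inj_on \<phi> M \<and> (\<forall>e\<in>M. \<phi> e \<in> {1..n} \<and> e \<in> Ms (\<phi> e)))"

end

theory Submission
  imports Defs "HOL-Number_Theory.Cong"
begin

(* Take N odd, a little larger than n, and let each of the r parts be a copy of Z/NZ.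
   The first matching consists of the diagonal edges (z, z, ..., z), the second of the
   edges (x, x + 1, 2x, x, ..., x).  A rainbow matching of size n uses about n/2 edges of
   each kind; their index sets Z and X are disjoint from each other and Z also avoids
   X + 1 and 2X, so each of the maps x -> x + 1 and x -> 2x sends at most N - n points
   of X outside X.  On the other hand, for d < 2^L the map x -> 2^L x + d is a product
   of L of these two maps, and averaging over d gives the isoperimetric inequality
   |X| (N - |X|) <= N L (#{x in X. 2x notin X} + #{x in X. x + 1 notin X})
   whenever 2^L >= N.  With 2^L of order (2 n^(1/r))^r, i.e. L of order r n^(1/r), and
   N - n of order n^((r-1)/r) / (12 r), the two bounds are incompatible. *)

section \<open>An isoperimetric inequality in Z/NZ\<close>

lemma inj_on_affine_mod:
  fixes c e N :: nat
  assumes "coprime c N"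
  shows "inj_on (\<lambda>x. (c * x + e) mod N) {..<N}"
proof (rule inj_onI)
  fix x y assume "x \<in> {..<N}" "y \<in> {..<N}" "(c * x + e) mod N = (c * y + e) mod N"
  then show "x = y"
    using assms by (auto simp: cong_def[symmetric] cong_add_rcancel_nat cong_mult_lcancel_nat
        intro: cong_less_modulus_unique_nat)
qed

definition escapes :: "('a \<Rightarrow> 'a) \<Rightarrow> 'a set \<Rightarrow> 'a set" where
  "escapes f X = {x \<in> X. f x \<notin> X}"

lemma card_escapes_comp_le:
  assumes "finite X" and "inj_on h X"
  shows "card (escapes (g \<circ> h) X) \<le> card (escapes h X) + card (escapes g X)"
proof -
  define S where "S = {x \<in> X. h x \<in> X \<and> g (h x) \<notin> X}"
  have "card (escapes (g \<circ> h) X) \<le> card (escapes h X \<union> S)"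
    using assms(1) by (intro card_mono) (auto simp: escapes_def S_def)
  also have "\<dots> \<le> card (escapes h X) + card S"
    by (rule card_Un_le)
  finally have "card (escapes (g \<circ> h) X) \<le> card (escapes h X) + card S" .
  moreover have "card S \<le> card (escapes g X)"
  proof -
    have "inj_on h S"
      using assms(2) by (rule inj_on_subset) (auto simp: S_def)
    then have "card S = card (h ` S)"
      by (simp add: card_image)
    also have "\<dots> \<le> card (escapes g X)"
      using assms(1) by (intro card_mono) (auto simp: S_def escapes_def)
    finally show ?thesis .
  qed
  ultimately show ?thesis
    by linarith
qed

lemma card_escapes_affine_pow2_le:
  fixes N L d :: nat
  assumes "odd N" and "X \<subseteq> {..<N}" and "d < 2 ^ L"
  shows "card (escapes (\<lambda>x. (2 ^ L * x + d) mod N) X)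
    \<le> L * (card (escapes (\<lambda>x. 2 * x mod N) X) + card (escapes (\<lambda>x. (x + 1) mod N) X))"
  using assms(3)
proof (induction L arbitrary: d)
  case 0
  then have "escapes (\<lambda>x. (2 ^ 0 * x + d) mod N) X = {}"
    using assms(2) by (auto simp: escapes_def)
  then show ?case
    by simp
next
  case (Suc L)
  define dbl where "dbl = (\<lambda>x. 2 * x mod N)"
  define succ where "succ = (\<lambda>x::nat. (x + 1) mod N)"
  define T where "T = (\<lambda>x. (2 ^ L * x + d div 2) mod N)"
  have fin: "finite X"
    using assms(2) finite_subset by blast
  have coprime: "coprime (2 ^ k) N" for k :: nat
    using assms(1) by (simp add: coprime_left_2_iff_odd)
  have inj_T: "inj_on T X"
    using inj_on_subset[OF inj_on_affine_mod[OF coprime] assms(2)] by (simp add: T_def)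
  have inj_dbl: "inj_on dbl X"
    using inj_on_subset[OF inj_on_affine_mod[OF coprime, of 1 0] assms(2)] by (simp add: dbl_def)
  have IH: "card (escapes T X) \<le> L * (card (escapes dbl X) + card (escapes succ X))"
    using Suc by (simp add: T_def dbl_def succ_def)
  have "(2 ^ Suc L * x + d) mod N = (if even d then dbl (T x) else succ (dbl (T x)))" for x
  proof -
    have "2 ^ Suc L * x + d = 2 * (2 ^ L * x + d div 2) + d mod 2"
      by simp
    then have "(2 ^ Suc L * x + d) mod N = (2 * T x + d mod 2) mod N"
      unfolding T_def by (metis mod_add_left_eq mod_mult_right_eq)
    moreover have "d mod 2 = (if even d then 0 else 1)"
      by (simp add: even_iff_mod_2_eq_zero odd_iff_mod_2_eq_one)
    ultimately show ?thesis
      by (simp add: dbl_def succ_def mod_Suc_eq)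
  qed
  then have step: "(\<lambda>x. (2 ^ Suc L * x + d) mod N) = (if even d then dbl \<circ> T else succ \<circ> dbl \<circ> T)"
    by auto
  have "card (escapes (dbl \<circ> T) X) \<le> card (escapes T X) + card (escapes dbl X)"
    by (rule card_escapes_comp_le[OF fin inj_T])
  moreover have "card (escapes (succ \<circ> dbl \<circ> T) X)
      \<le> card (escapes T X) + card (escapes dbl X) + card (escapes succ X)"
    using card_escapes_comp_le[OF fin inj_T, of "succ \<circ> dbl"]
      card_escapes_comp_le[OF fin inj_dbl, of succ]
    by (simp add: comp_assoc)
  ultimately have "card (escapes (\<lambda>x. (2 ^ Suc L * x + d) mod N) X)
      \<le> Suc L * (card (escapes dbl X) + card (escapes succ X))"
    unfolding step using IH by (cases "even d") simp_all
  then show ?case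
    by (simp only: dbl_def succ_def)
qed

lemma card_translate_not_in:
  fixes a N :: nat
  assumes "X \<subseteq> {..<N}"
  shows "card {d \<in> {..<N}. (a + d) mod N \<notin> X} = N - card X"
proof -
  define f where "f = (\<lambda>d. (1 * d + a) mod N)"
  have inj: "inj_on f {..<N}"
    unfolding f_def by (rule inj_on_affine_mod) simp
  have "f ` {..<N} = {..<N}"
    using inj by (intro endo_inj_surj) (auto simp: f_def)
  moreover have "f ` {d \<in> {..<N}. f d \<notin> X} = f ` {..<N} - X"
    by auto
  ultimately have "f ` {d \<in> {..<N}. f d \<notin> X} = {..<N} - X"
    by simp
  moreover have "inj_on f {d \<in> {..<N}. f d \<notin> X}"
    using inj by (rule inj_on_subset) blast
  ultimately have "card {d \<in> {..<N}. f d \<notin> X} = card ({..<N} - X)"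
    using card_image by fastforce
  also have "\<dots> = N - card X"
    using assms by (simp add: card_Diff_subset finite_subset)
  finally show ?thesis
    by (simp add: f_def add.commute)
qed

lemma sum_card_escapes_translates:
  fixes N :: nat and c :: "nat \<Rightarrow> nat"
  assumes "X \<subseteq> {..<N}"
  shows "(\<Sum>d<N. card (escapes (\<lambda>x. (c x + d) mod N) X)) = card X * (N - card X)"
proof -
  have fin: "finite X"
    using assms finite_subset by blast
  have "(\<Sum>d<N. card (escapes (\<lambda>x. (c x + d) mod N) X))
      = (\<Sum>d<N. \<Sum>x\<in>X. of_bool ((c x + d) mod N \<notin> X))"
    using fin by (simp add: escapes_def Collect_conj_eq Int_commute)
  also have "\<dots> = (\<Sum>x\<in>X. \<Sum>d<N. of_bool ((c x + d) mod N \<notin> X))"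
    by (rule sum.swap)
  also have "\<dots> = (\<Sum>x\<in>X. N - card X)"
    using card_translate_not_in[OF assms] by (simp add: Collect_conj_eq Int_commute lessThan_def)
  finally show ?thesis
    by simp
qed

lemma isoperimetric_inequality_mod:
  fixes N L :: nat
  assumes "odd N" and "X \<subseteq> {..<N}" and "N \<le> 2 ^ L"
  shows "card X * (N - card X)
    \<le> N * L * (card (escapes (\<lambda>x. 2 * x mod N) X) + card (escapes (\<lambda>x. (x + 1) mod N) X))"
proof -
  have "card X * (N - card X) = (\<Sum>d<N. card (escapes (\<lambda>x. (2 ^ L * x + d) mod N) X))"
    using sum_card_escapes_translates[OF assms(2)] by simp
  also have "\<dots> \<le> (\<Sum>d<N.
      L * (card (escapes (\<lambda>x. 2 * x mod N) X) + card (escapes (\<lambda>x. (x + 1) mod N) X)))"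
    using assms by (intro sum_mono card_escapes_affine_pow2_le) auto
  finally show ?thesis
    by (simp add: mult.assoc)
qed

lemma card_add_card_escapes_le:
  assumes "finite X" and "inj_on g X"
  shows "card X + card (escapes g X) \<le> card (X \<union> g ` X)"
proof -
  have "inj_on g (escapes g X)"
    using assms(2) by (rule inj_on_subset) (auto simp: escapes_def)
  then have "card X + card (escapes g X) = card X + card (g ` escapes g X)"
    by (simp add: card_image)
  also have "\<dots> = card (X \<union> g ` escapes g X)"
    using assms(1) by (intro card_Un_disjoint[symmetric]) (auto simp: escapes_def)
  also have "\<dots> \<le> card (X \<union> g ` X)"
    using assms(1) by (intro card_mono) (auto simp: escapes_def)
  finally show ?thesis .
qed

lemma card_avoiding_pair_le:
  fixes N L :: nat
  assumes "odd N" and "N \<le> 2 ^ L" and "Z \<subseteq> {..<N}" and "X \<subseteq> {..<N}"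
    and avoid: "\<And>z x. z \<in> Z \<Longrightarrow> x \<in> X \<Longrightarrow> z \<noteq> x \<and> z \<noteq> (x + 1) mod N \<and> z \<noteq> 2 * x mod N"
  shows "card X * (N - card X) \<le> 2 * N * L * (N - (card Z + card X))"
proof -
  define succ where "succ = (\<lambda>x::nat. (x + 1) mod N)"
  define dbl where "dbl = (\<lambda>x. 2 * x mod N)"
  define Y where "Y = X \<union> succ ` X \<union> dbl ` X"
  have "N > 0"
    using assms(1) by (rule odd_pos)
  then have Y: "Y \<subseteq> {..<N}"
    using assms(4) by (auto simp: Y_def succ_def dbl_def)
  have fin: "finite X" "finite Y" "finite Z"
    using assms(3,4) Y finite_subset by blast+
  have "Z \<inter> Y = {}"
    using avoid unfolding Y_def succ_def dbl_def by blast
  then have "card Z + card Y = card (Z \<union> Y)"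
    using fin by (simp add: card_Un_disjoint)
  also have "\<dots> \<le> N"
    using assms(3) Y card_mono[of "{..<N}" "Z \<union> Y"] by simp
  finally have ZY: "card Z + card Y \<le> N" .
  have inj_succ: "inj_on succ X"
    using inj_on_subset[OF inj_on_affine_mod[of 1 N 1] assms(4)] by (simp add: succ_def)
  have inj_dbl: "inj_on dbl X"
    using inj_on_subset[OF inj_on_affine_mod[of 2 N 0] assms(4)] assms(1)
    by (simp add: dbl_def coprime_left_2_iff_odd)
  have "card (X \<union> succ ` X) \<le> card Y" "card (X \<union> dbl ` X) \<le> card Y"
    using fin(2) by (auto simp: Y_def intro!: card_mono)
  then have "card X + card (escapes succ X) \<le> card Y" "card X + card (escapes dbl X) \<le> card Y"
    using card_add_card_escapes_le[OF fin(1) inj_succ] card_add_card_escapes_le[OF fin(1) inj_dbl]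
    by linarith+
  with ZY have "card (escapes dbl X) + card (escapes succ X) \<le> 2 * (N - (card Z + card X))"
    by linarith
  then have "N * L * (card (escapes dbl X) + card (escapes succ X))
      \<le> N * L * (2 * (N - (card Z + card X)))"
    by (rule mult_le_mono2)
  moreover have "card X * (N - card X) \<le> N * L * (card (escapes dbl X) + card (escapes succ X))"
    unfolding dbl_def succ_def by (rule isoperimetric_inequality_mod[OF assms(1,4,2)])
  ultimately show ?thesis
    by (metis (no_types, lifting) order_trans mult.assoc mult.left_commute)
qed

section \<open>The hypergraph and its two matchings\<close>

(* Vertex v < N of the j-th part is encoded as the number j * N + v; the edge
   transversal r N f meets part j in its vertex f j. *)

definition layer :: "nat \<Rightarrow> nat \<Rightarrow> nat set" where
  "layer N j = {j * N..<j * N + N}"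

definition transversal :: "nat \<Rightarrow> nat \<Rightarrow> (nat \<Rightarrow> nat) \<Rightarrow> nat set" where
  "transversal r N f = (\<lambda>j. j * N + f j) ` {1..r}"

definition coord_matching :: "nat \<Rightarrow> nat \<Rightarrow> (nat \<Rightarrow> nat \<Rightarrow> nat) \<Rightarrow> nat set set" where
  "coord_matching r N F = (\<lambda>x. transversal r N (F x)) ` {..<N}"

definition twist :: "nat \<Rightarrow> nat \<Rightarrow> nat \<Rightarrow> nat" where
  "twist N x j = (if j = 2 then (x + 1) mod N else if j = 3 then 2 * x mod N else x)"

lemma mult_add_eq_mult_add_iff:
  fixes j j' a b N :: nat
  assumes "a < N" and "b < N"
  shows "j * N + a = j' * N + b \<longleftrightarrow> j = j' \<and> a = b"
proof
  assume eq: "j * N + a = j' * N + b"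
  have "(j * N + a) div N = j" and "(j' * N + b) div N = j'"
    using assms by simp_all
  with eq have "j = j'"
    by simp
  with eq show "j = j' \<and> a = b"
    by simp
qed simp

lemma transversal_Int_layer:
  assumes "\<forall>j\<in>{1..r}. f j < N" and "i \<in> {1..r}"
  shows "transversal r N f \<inter> layer N i = {i * N + f i}"
proof -
  have "j * N + f j \<in> layer N i \<longleftrightarrow> j = i" if "j \<in> {1..r}" for j
  proof
    assume "j * N + f j \<in> layer N i"
    then have "j * N + f j = i * N + (j * N + f j - i * N)" and "j * N + f j - i * N < N"
      by (auto simp: layer_def)
    then show "j = i"
      using mult_add_eq_mult_add_iff assms(1) that by blast
  qed (use assms(1) that in \<open>auto simp: layer_def\<close>)
  then show ?thesis
    using assms(2) by (auto simp: transversal_def)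
qed

lemma transversal_disjoint_iff:
  assumes "\<forall>j\<in>{1..r}. f j < N" and "\<forall>j\<in>{1..r}. g j < N"
  shows "transversal r N f \<inter> transversal r N g = {} \<longleftrightarrow> (\<forall>j\<in>{1..r}. f j \<noteq> g j)"
proof
  assume disjoint: "transversal r N f \<inter> transversal r N g = {}"
  show "\<forall>j\<in>{1..r}. f j \<noteq> g j"
  proof (intro ballI notI)
    fix j assume j: "j \<in> {1..r}" and "f j = g j"
    then have "j * N + f j \<in> transversal r N f" and "j * N + f j \<in> transversal r N g"
      unfolding transversal_def by (auto intro: rev_image_eqI)
    with disjoint show False
      by blast
  qed
next
  assume distinct: "\<forall>j\<in>{1..r}. f j \<noteq> g j"
  show "transversal r N f \<inter> transversal r N g = {}"
  proof (rule equals0I)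
    fix v assume "v \<in> transversal r N f \<inter> transversal r N g"
    then obtain i j where ij: "i \<in> {1..r}" "j \<in> {1..r}" and "i * N + f i = j * N + g j"
      unfolding transversal_def by blast
    moreover have "f i < N" "g j < N"
      using assms ij by blast+
    ultimately have "j \<in> {1..r} \<and> f j = g j"
      using mult_add_eq_mult_add_iff[of "f i" N "g j" i j] by auto
    with distinct show False
      by blast
  qed
qed

lemma card_transversal:
  assumes "\<forall>j\<in>{1..r}. f j < N"
  shows "card (transversal r N f) = r"
proof -
  have "inj_on (\<lambda>j. j * N + f j) {1..r}"
  proof (rule inj_onI)
    fix i j assume "i \<in> {1..r}" "j \<in> {1..r}" "i * N + f i = j * N + f j"
    with assms show "i = j"
      using mult_add_eq_mult_add_iff[of "f i" N "f j" i j] by simp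
  qed
  then show ?thesis
    by (simp add: transversal_def card_image)
qed

lemma layers_disjoint:
  assumes "i \<noteq> j"
  shows "layer N i \<inter> layer N j = {}"
proof (rule equals0I)
  fix v assume "v \<in> layer N i \<inter> layer N j"
  then have "i * N + (v - i * N) = j * N + (v - j * N)" "v - i * N < N" "v - j * N < N"
    by (auto simp: layer_def)
  with assms show False
    using mult_add_eq_mult_add_iff[of "v - i * N" N "v - j * N" i j] by simp
qed

lemma transversal_subset_layers:
  assumes "\<forall>j\<in>{1..r}. f j < N"
  shows "transversal r N f \<subseteq> (\<Union>j\<in>{1..r}. layer N j)"
  using assms by (auto simp: transversal_def layer_def)

lemma transversal_hypergraph:
  assumes "\<And>e. e \<in> E \<Longrightarrow> \<exists>f. e = transversal r N f \<and> (\<forall>j\<in>{1..r}. f j < N)"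
  defines "V \<equiv> \<Union>j\<in>{1..r}. layer N j"
  shows "hypergraph V E \<and> r_uniform r E \<and> r_partite r V E"
proof -
  have edge: "finite e \<and> card e = r \<and> e \<subseteq> V \<and> (\<forall>i\<in>{1..r}. card (e \<inter> layer N i) = 1)"
    if "e \<in> E" for e
  proof -
    obtain f where e: "e = transversal r N f" and f: "\<forall>j\<in>{1..r}. f j < N"
      using assms(1) \<open>e \<in> E\<close> by blast
    have "finite e"
      by (simp add: e transversal_def)
    with f show ?thesis
      unfolding e V_def using transversal_subset_layers[OF f]
      by (simp add: card_transversal transversal_Int_layer)
  qed
  have "finite V"
    by (simp add: V_def layer_def)
  then have "hypergraph V E" and "r_uniform r E"
    using edge by (simp_all add: hypergraph_def r_uniform_def)
  moreover have "r_partite r V E"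
    unfolding r_partite_def
  proof (intro exI conjI)
    show "V = (\<Union>j\<in>{1..r}. layer N j)"
      by (simp add: V_def)
    show "\<forall>i\<in>{1..r}. \<forall>j\<in>{1..r}. i \<noteq> j \<longrightarrow> layer N i \<inter> layer N j = {}"
      by (simp add: layers_disjoint)
    show "\<forall>e\<in>E. \<forall>i\<in>{1..r}. card (e \<inter> layer N i) = 1"
      using edge by simp
  qed
  ultimately show ?thesis
    by blast
qed

lemma coord_matching_matching:
  assumes "r \<ge> 1"
    and bounded: "\<And>x j. x < N \<Longrightarrow> j \<in> {1..r} \<Longrightarrow> F x j < N"
    and inj: "\<And>j. j \<in> {1..r} \<Longrightarrow> inj_on (\<lambda>x. F x j) {..<N}"
    and "coord_matching r N F \<subseteq> E"
  shows "matching E (coord_matching r N F) \<and> card (coord_matching r N F) = N"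
proof -
  have disjoint: "transversal r N (F x) \<inter> transversal r N (F y) = {}"
    if xy: "x < N" "y < N" "x \<noteq> y" for x y
  proof -
    have "F x j \<noteq> F y j" if j: "j \<in> {1..r}" for j
      using inj_onD[OF inj[OF j], of x y] xy by auto
    with xy show ?thesis
      by (simp add: bounded transversal_disjoint_iff)
  qed
  have nonempty: "transversal r N (F x) \<noteq> {}" for x
    using assms(1) by (simp add: transversal_def)
  have "inj_on (\<lambda>x. transversal r N (F x)) {..<N}"
  proof (rule inj_onI)
    fix x y assume "x \<in> {..<N}" "y \<in> {..<N}" and eq: "transversal r N (F x) = transversal r N (F y)"
    with disjoint[of x y] nonempty[of x] show "x = y"
      by auto
  qed
  moreover have "matching E (coord_matching r N F)"
    unfolding matching_def
  proof (intro conjI ballI impI)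
    show "coord_matching r N F \<subseteq> E"
      by (rule assms(4))
    fix e e' assume "e \<in> coord_matching r N F" "e' \<in> coord_matching r N F" "e \<noteq> e'"
    then obtain x y where "x < N" "y < N" "x \<noteq> y"
      and "e = transversal r N (F x)" "e' = transversal r N (F y)"
      unfolding coord_matching_def by blast
    with disjoint show "e \<inter> e' = {}"
      by blast
  qed
  ultimately show ?thesis
    by (simp add: coord_matching_def card_image)
qed

lemma twist_less: "x < N \<Longrightarrow> twist N x j < N"
  by (simp add: twist_def)

lemma inj_on_twist:
  assumes "odd N"
  shows "inj_on (\<lambda>x. twist N x j) {..<N}"
proof -
  have "inj_on (\<lambda>x. (1 * x + 1) mod N) {..<N}"
    by (rule inj_on_affine_mod) simp
  moreover have "inj_on (\<lambda>x. (2 * x + 0) mod N) {..<N}"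
    using assms by (intro inj_on_affine_mod) (simp add: coprime_left_2_iff_odd)
  moreover have "(\<lambda>x. twist N x j) =
      (if j = 2 then (\<lambda>x. (1 * x + 1) mod N) else if j = 3 then (\<lambda>x. (2 * x + 0) mod N) else id)"
    by (simp add: twist_def fun_eq_iff)
  ultimately show ?thesis
    by (simp split: if_splits)
qed

lemma transversal_diagonal_twist_disjointD:
  assumes "r \<ge> 3" and "z < N" and "x < N"
    and "transversal r N (\<lambda>_. z) \<inter> transversal r N (twist N x) = {}"
  shows "z \<noteq> x \<and> z \<noteq> (x + 1) mod N \<and> z \<noteq> 2 * x mod N"
proof -
  have "\<forall>j\<in>{1..r}. z \<noteq> twist N x j"
    using assms(2-4) by (simp add: transversal_disjoint_iff twist_less)
  then have "z \<noteq> twist N x 1" "z \<noteq> twist N x 2" "z \<noteq> twist N x 3"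
    using assms(1) by simp_all
  then show ?thesis
    by (simp add: twist_def)
qed

lemma diagonal_twist_hypergraph:
  fixes r N :: nat
  assumes "r \<ge> 1" and "odd N"
  defines "E \<equiv> coord_matching r N (\<lambda>x _. x) \<union> coord_matching r N (twist N)"
  shows "hypergraph (\<Union>j\<in>{1..r}. layer N j) E \<and> r_uniform r E \<and> r_partite r (\<Union>j\<in>{1..r}. layer N j) E"
    and "matching E (coord_matching r N (\<lambda>x _. x)) \<and> card (coord_matching r N (\<lambda>x _. x)) = N"
    and "matching E (coord_matching r N (twist N)) \<and> card (coord_matching r N (twist N)) = N"
proof -
  have "\<exists>f. e = transversal r N f \<and> (\<forall>j\<in>{1..r}. f j < N)" if "e \<in> E" for e
    using that twist_less unfolding E_def coord_matching_def by auto
  then show "hypergraph (\<Union>j\<in>{1..r}. layer N j) E \<and> r_uniform r E \<and> r_partite r (\<Union>j\<in>{1..r}. layer N j) E"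
    by (rule transversal_hypergraph)
  show "matching E (coord_matching r N (\<lambda>x _. x)) \<and> card (coord_matching r N (\<lambda>x _. x)) = N"
    using assms(1) by (intro coord_matching_matching) (simp_all add: E_def)
  show "matching E (coord_matching r N (twist N)) \<and> card (coord_matching r N (twist N)) = N"
    using assms(1,2) by (intro coord_matching_matching) (simp_all add: E_def twist_less inj_on_twist)
qed

section \<open>Rainbow matchings of the construction\<close>

lemma rainbow_matching_split:
  assumes "rainbow_matching Ms n M" and "card M = n" and "m \<le> n"
  obtains M1 M2 where "M1 \<union> M2 \<subseteq> M" and "M1 \<inter> M2 = {}"
    and "card M1 = m" and "card M2 = n - m"
    and "\<And>e. e \<in> M1 \<Longrightarrow> \<exists>i\<in>{1..m}. e \<in> Ms i"
    and "\<And>e. e \<in> M2 \<Longrightarrow> \<exists>i\<in>{m<..n}. e \<in> Ms i"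
proof -
  obtain \<phi> where inj: "inj_on \<phi> M" and \<phi>: "\<And>e. e \<in> M \<Longrightarrow> \<phi> e \<in> {1..n} \<and> e \<in> Ms (\<phi> e)"
    using assms(1) unfolding rainbow_matching_def by blast
  have "\<phi> ` M \<subseteq> {1..n}"
    using \<phi> by blast
  moreover have "card (\<phi> ` M) = card {1..n}"
    using assms(2) inj by (simp add: card_image)
  ultimately have image: "\<phi> ` M = {1..n}"
    by (simp add: card_subset_eq)
  define M1 where "M1 = {e \<in> M. \<phi> e \<le> m}"
  define M2 where "M2 = {e \<in> M. m < \<phi> e}"
  have "\<phi> ` M1 = \<phi> ` M \<inter> {..m}" and "\<phi> ` M2 = \<phi> ` M \<inter> {m<..}"
    unfolding M1_def M2_def by auto
  then have "\<phi> ` M1 = {1..m}" and "\<phi> ` M2 = {m<..n}"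
    using image assms(3) by auto
  moreover have "inj_on \<phi> M1" and "inj_on \<phi> M2"
    using inj by (auto simp: M1_def M2_def intro: inj_on_subset)
  ultimately have "card M1 = m" and "card M2 = n - m"
    by (metis card_image card_atLeastAtMost diff_Suc_1 card_greaterThanAtMost)+
  moreover have "\<exists>i\<in>{1..m}. e \<in> Ms i" if "e \<in> M1" for e
    using that \<phi> by (intro bexI[of _ "\<phi> e"]) (auto simp: M1_def)
  moreover have "\<exists>i\<in>{m<..n}. e \<in> Ms i" if "e \<in> M2" for e
    using that \<phi> by (intro bexI[of _ "\<phi> e"]) (auto simp: M2_def)
  ultimately show thesis
    by (intro that[of M1 M2]) (auto simp: M1_def M2_def)
qed

lemma subset_coord_matchingE:
  assumes "M \<subseteq> coord_matching r N F"
  obtains Z where "Z \<subseteq> {..<N}" and "M = (\<lambda>x. transversal r N (F x)) ` Z" and "card Z = card M"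
proof -
  obtain Z where "Z \<subseteq> {..<N}" "inj_on (\<lambda>x. transversal r N (F x)) Z"
      "M = (\<lambda>x. transversal r N (F x)) ` Z"
    using assms unfolding coord_matching_def subset_image_inj by blast
  then show thesis
    by (intro that[of Z]) (simp_all add: card_image)
qed

lemma rainbow_matching_index_sets:
  fixes r N mA n :: nat
  assumes "r \<ge> 3" and "rainbow_matching Ms n M" and "card M = n" and "mA \<le> n"
    and A: "\<And>i. i \<in> {1..mA} \<Longrightarrow> Ms i = coord_matching r N (\<lambda>x _. x)"
    and B: "\<And>i. i \<in> {mA<..n} \<Longrightarrow> Ms i = coord_matching r N (twist N)"
  obtains Z X where "Z \<subseteq> {..<N}" and "X \<subseteq> {..<N}" and "card Z = mA" and "card X = n - mA"
    and "\<And>z x. z \<in> Z \<Longrightarrow> x \<in> X \<Longrightarrow> z \<noteq> x \<and> z \<noteq> (x + 1) mod N \<and> z \<noteq> 2 * x mod N"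
proof -
  have disjoint: "\<forall>e\<in>M. \<forall>f\<in>M. e \<noteq> f \<longrightarrow> e \<inter> f = {}"
    using assms(2) by (simp add: rainbow_matching_def)
  obtain M1 M2 where M12: "M1 \<union> M2 \<subseteq> M" "M1 \<inter> M2 = {}"
    and card: "card M1 = mA" "card M2 = n - mA"
    and in1: "\<And>e. e \<in> M1 \<Longrightarrow> \<exists>i\<in>{1..mA}. e \<in> Ms i"
    and in2: "\<And>e. e \<in> M2 \<Longrightarrow> \<exists>i\<in>{mA<..n}. e \<in> Ms i"
    by (fact rainbow_matching_split[OF assms(2-4)])
  have "M1 \<subseteq> coord_matching r N (\<lambda>x _. x)"
    using in1 A by fastforce
  then obtain Z where Z: "Z \<subseteq> {..<N}" "M1 = (\<lambda>z. transversal r N (\<lambda>_. z)) ` Z" "card Z = mA"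
    using card by (auto elim: subset_coord_matchingE)
  have "M2 \<subseteq> coord_matching r N (twist N)"
    using in2 B by fastforce
  then obtain X where X: "X \<subseteq> {..<N}" "M2 = (\<lambda>x. transversal r N (twist N x)) ` X" "card X = n - mA"
    using card by (auto elim: subset_coord_matchingE)
  have "z \<noteq> x \<and> z \<noteq> (x + 1) mod N \<and> z \<noteq> 2 * x mod N" if "z \<in> Z" "x \<in> X" for z x
  proof (rule transversal_diagonal_twist_disjointD[OF assms(1)])
    show "z < N" "x < N"
      using that Z X by auto
    have in1: "transversal r N (\<lambda>_. z) \<in> M1" and in2: "transversal r N (twist N x) \<in> M2"
      using that Z X by auto
    then have "transversal r N (\<lambda>_. z) \<noteq> transversal r N (twist N x)"
      using M12(2) by auto
    moreover have "transversal r N (\<lambda>_. z) \<in> M" "transversal r N (twist N x) \<in> M"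
      using in1 in2 M12(1) by auto
    ultimately show "transversal r N (\<lambda>_. z) \<inter> transversal r N (twist N x) = {}"
      using disjoint by simp
  qed
  with Z X show thesis
    by (intro that[of Z X]) simp_all
qed

lemma no_rainbow_matching:
  fixes r N L mA mB n :: nat
  assumes "r \<ge> 3" and "odd N" and "N \<le> 2 ^ L" and "mA + mB = n"
    and large: "2 * N * L * (N - n) < mB * (N - mB)"
    and "\<And>i. i \<in> {1..mA} \<Longrightarrow> Ms i = coord_matching r N (\<lambda>x _. x)"
    and "\<And>i. i \<in> {mA<..n} \<Longrightarrow> Ms i = coord_matching r N (twist N)"
  shows "\<not> (\<exists>M. rainbow_matching Ms n M \<and> card M = n)"
proof
  assume "\<exists>M. rainbow_matching Ms n M \<and> card M = n"
  then obtain M where M: "rainbow_matching Ms n M" "card M = n"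
    by blast
  have "mA \<le> n"
    using assms(4) by simp
  then obtain Z X where "Z \<subseteq> {..<N}" "X \<subseteq> {..<N}" "card Z = mA" "card X = n - mA"
    and "\<And>z x. z \<in> Z \<Longrightarrow> x \<in> X \<Longrightarrow> z \<noteq> x \<and> z \<noteq> (x + 1) mod N \<and> z \<noteq> 2 * x mod N"
    using rainbow_matching_index_sets[OF assms(1) M] assms(6,7) by metis
  then have "mB * (N - mB) \<le> 2 * N * L * (N - n)"
    using card_avoiding_pair_le[OF assms(2,3)] assms(4) by fastforce
  with large show False
    by simp
qed

section \<open>Choice of parameters\<close>

lemma powr_minus_one_div_eq_root_power:
  fixes x :: real and r :: nat
  assumes "x > 0" and "r \<ge> 1"
  shows "x powr ((real r - 1) / real r) = root r x ^ (r - 1)"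
proof -
  have "root r x > 0"
    using assms by simp
  then have "root r x ^ (r - 1) = root r x powr real (r - 1)"
    by (simp add: powr_realpow)
  also have "\<dots> = x powr (1 / real r * real (r - 1))"
    using assms by (simp add: root_powr_inverse powr_powr)
  also have "\<dots> = x powr ((real r - 1) / real r)"
    using assms by (simp add: of_nat_diff)
  finally show ?thesis ..
qed

lemma twelve_mult_le_six_power: "r \<ge> 3 \<Longrightarrow> 12 * r \<le> (6::nat) ^ (r - 1)"
proof (induction r rule: nat_induct_at_least)
  case (Suc r)
  then have "(6::nat) ^ (Suc r - 1) = 6 * 6 ^ (r - 1)"
    by (cases r) simp_all
  with Suc show ?case
    by simp
qed simp

lemma twelve_mult_le_power:
  fixes u :: real
  assumes "r \<ge> 3" and "u \<ge> 6"
  shows "12 * real r \<le> u ^ (r - 1)"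
proof -
  have "real (12 * r) \<le> 6 ^ (r - 1)"
    using twelve_mult_le_six_power[OF assms(1)] by (metis of_nat_le_iff of_nat_numeral of_nat_power)
  also have "(6::real) ^ (r - 1) \<le> u ^ (r - 1)"
    using assms(2) by (intro power_mono) simp_all
  finally show ?thesis
    by simp
qed

lemma four_mult_Suc_le_power_two: "k \<ge> 3 \<Longrightarrow> 4 * (k + 1) \<le> (2::nat) ^ (k + 1)"
  by (induction k rule: nat_induct_at_least) simp_all

lemma exists_power_two_between:
  fixes u :: real
  assumes "u > 6"
  obtains K :: nat where "2 * u \<le> 2 ^ K" and "real K \<le> u / 2 + 1"
proof
  define k where "k = nat \<lfloor>u / 2\<rfloor>"
  have "k \<ge> 3" and "u < 2 * real k + 2"
    using assms by (simp_all add: k_def) linarith+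
  moreover have "real (4 * (k + 1)) \<le> real ((2::nat) ^ (k + 1))"
    using four_mult_Suc_le_power_two[OF \<open>k \<ge> 3\<close>] by (simp only: of_nat_le_iff)
  ultimately show "2 * u \<le> 2 ^ (k + 1)"
    by simp
  show "real (k + 1) \<le> u / 2 + 1"
    using assms by (simp add: k_def) linarith
qed

lemma exists_odd_between:
  fixes x :: real
  assumes "x \<ge> 0"
  obtains N :: nat where "odd N" and "x \<le> real N" and "real N \<le> x + 2"
proof -
  define c where "c = nat \<lceil>x\<rceil>"
  have "x \<le> real c" and "real c < x + 1"
    using assms by (simp_all add: c_def) linarith+
  show thesis
  proof (cases "odd c")
    case True
    with \<open>x \<le> real c\<close> \<open>real c < x + 1\<close> show thesis
      by (intro that[of c]) simp_all
  next
    case False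
    with \<open>x \<le> real c\<close> \<open>real c < x + 1\<close> show thesis
      by (intro that[of "c + 1"]) simp_all
  qed
qed

lemma rainbow_numeric_bound:
  fixes u :: real and r K D :: nat
  assumes "r \<ge> 3" and "u > 6"
    and D: "real D \<le> u ^ (r - 1) / (12 * r) + 1" and K: "real K \<le> u / 2 + 1"
  shows "8 * real r * real K * real D < u ^ r - 1"
proof -
  define p where "p = u ^ (r - 1)"
  have p: "12 * real r \<le> p"
    unfolding p_def using twelve_mult_le_power assms(1,2) by simp
  obtain m where m: "r = Suc m"
    using assms(1) by (cases r) simp_all
  have up: "u ^ r = u * p"
    by (simp add: p_def m)
  have "8 * real r * real K * real D \<le> 8 * real r * (u / 2 + 1) * (p / (12 * r) + 1)"
    using D K assms(2) unfolding p_def by (intro mult_mono) simp_all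
  also have "\<dots> = (u * p + 2 * p) / 3 + 4 * (real r * u) + 8 * real r"
    using assms(1) by (simp add: field_simps)
  also have "\<dots> < u * p - 1"
  proof -
    have "6 * p \<le> u * p"
      using p assms(2) by (intro mult_right_mono) simp_all
    moreover have "12 * (real r * u) \<le> u * p"
      using mult_left_mono[OF p, of u] assms(2) by (simp add: algebra_simps)
    moreover have "6 * real r < real r * u"
      using assms by (simp add: mult.commute)
    moreover have "real r \<ge> 3"
      using assms(1) by simp
    ultimately show ?thesis
      by argo
  qed
  finally show ?thesis
    by (simp add: up)
qed

lemma le_power_two_mult:
  fixes u :: real and r n N K :: nat
  assumes "r \<ge> 1" and "u \<ge> 0" and n: "real n = u ^ r"
    and "2 * u \<le> 2 ^ K" and "real N \<le> 2 * real n"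
  shows "N \<le> 2 ^ (r * K)"
proof -
  have "(2::real) \<le> 2 ^ r"
    using assms(1) by (simp add: self_le_power)
  then have "real N \<le> 2 ^ r * real n"
    using assms(5) mult_right_mono[of 2 "2 ^ r" "real n"] by simp
  also have "\<dots> = (2 * u) ^ r"
    by (simp add: n power_mult_distrib)
  also have "\<dots> \<le> (2 ^ K) ^ r"
    using assms(2,4) by (intro power_mono) simp_all
  finally have "real N \<le> real (2 ^ (r * K))"
    by (simp add: power_mult mult.commute)
  then show ?thesis
    by (simp only: of_nat_le_iff)
qed

lemma rainbow_parameters_root:
  fixes u :: real and r n :: nat
  assumes "r \<ge> 3" and "u > 6" and n: "real n = u ^ r"
  obtains N L :: nat where "odd N" and "n \<le> N" and "real N \<ge> real n + u ^ (r - 1) / (12 * r) - 1"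
    and "N \<le> 2 ^ L" and "8 * L * (N - n) + 1 < n"
proof -
  define s where "s = u ^ (r - 1) / (12 * r)"
  have "12 * real r \<le> u ^ (r - 1)"
    using twelve_mult_le_power assms(1,2) by simp
  then have "1 \<le> s" and "s \<le> u ^ (r - 1)"
    using assms(1) by (simp_all add: s_def field_simps)
  obtain m where m: "r = Suc m"
    using assms(1) by (cases r) simp_all
  have "6 * u ^ (r - 1) \<le> u * u ^ (r - 1)"
    using assms(2) by (intro mult_right_mono) simp_all
  also have "\<dots> = real n"
    by (simp add: n m)
  finally have s_le: "s + 1 \<le> real n"
    using \<open>1 \<le> s\<close> \<open>s \<le> u ^ (r - 1)\<close> by linarith
  have "real n + s - 1 \<ge> 0"
    using \<open>1 \<le> s\<close> by simp
  then obtain N where "odd N" and N: "real n + s - 1 \<le> real N" "real N \<le> real n + s - 1 + 2"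
    by (rule exists_odd_between)
  have "n \<le> N"
    using N(1) \<open>1 \<le> s\<close> by linarith
  then have D: "real (N - n) \<le> u ^ (r - 1) / (12 * r) + 1"
    using N(2) by (simp add: of_nat_diff s_def)
  obtain K where K: "2 * u \<le> 2 ^ K" "real K \<le> u / 2 + 1"
    using assms(2) by (rule exists_power_two_between)
  have "real N \<le> 2 * real n"
    using N(2) s_le by linarith
  then have "N \<le> 2 ^ (r * K)"
    using assms(1,2) by (intro le_power_two_mult[OF _ _ n K(1)]) simp_all
  moreover have "8 * real r * real K * real (N - n) < real n - 1"
    using rainbow_numeric_bound[OF assms(1,2) D K(2)] n by simp
  then have "real (8 * (r * K) * (N - n) + 1) < real n"
    by simp
  then have "8 * (r * K) * (N - n) + 1 < n"
    by (simp only: of_nat_less_iff)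
  ultimately show thesis
    using \<open>odd N\<close> \<open>n \<le> N\<close> N(1) by (intro that[of N "r * K"]) (simp_all add: s_def)
qed

lemma rainbow_parameters:
  fixes r n :: nat
  assumes "r \<ge> 3" and "n > 6 ^ r"
  obtains N L :: nat where "odd N" and "n \<le> N" and "N \<le> 2 ^ L" and "8 * L * (N - n) + 1 < n"
    and "real N \<ge> real n + (1 / (12 * real r)) * real n powr ((real r - 1) / real r) - 1"
proof -
  define u where "u = root r (real n)"
  have "r > 0" and "n > 0" and "real n > 6 ^ r"
    using assms by (simp_all flip: of_nat_less_iff)
  then have n: "real n = u ^ r" and "6 < u"
    using real_root_less_mono[of r "6 ^ r" n] by (simp_all add: u_def real_root_power_cancel)
  have "real n powr ((real r - 1) / real r) = u ^ (r - 1)"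
    using \<open>r > 0\<close> \<open>n > 0\<close> unfolding u_def by (intro powr_minus_one_div_eq_root_power) simp_all
  moreover obtain N L where "odd N" "n \<le> N" "real n + u ^ (r - 1) / (12 * r) - 1 \<le> real N"
    "N \<le> 2 ^ L" "8 * L * (N - n) + 1 < n"
    using rainbow_parameters_root[OF assms(1) \<open>6 < u\<close> n] by blast
  ultimately show thesis
    by (intro that[of N L]) simp_all
qed

lemma mult_half_compl_large:
  fixes n N L :: nat
  assumes "n \<le> N" and "8 * L * (N - n) + 1 < n"
  shows "2 * N * L * (N - n) < n div 2 * (N - n div 2)"
proof -
  have "n \<le> 2 * (n div 2) + 1" and "2 * (n div 2) \<le> n"
    by linarith+
  then have "4 * L * (N - n) < n div 2" and "N \<le> 2 * (N - n div 2)" and "0 < N"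
    using assms by linarith+
  then have "2 * (2 * N * L * (N - n)) = 4 * L * (N - n) * N"
    by (simp add: algebra_simps)
  also have "\<dots> < n div 2 * N"
    using \<open>4 * L * (N - n) < n div 2\<close> \<open>0 < N\<close> by (rule mult_strict_right_mono)
  also have "\<dots> \<le> n div 2 * (2 * (N - n div 2))"
    using \<open>N \<le> 2 * (N - n div 2)\<close> by (rule mult_le_mono2)
  finally show ?thesis
    by (simp add: mult_ac)
qed

theorem theorem2p5:
  fixes r n :: nat
  assumes "r \<ge> 3" and "n > 6 ^ r"
  shows "\<exists>(V :: nat set) (E :: nat set set) (Ms :: nat \<Rightarrow> nat set set).
           hypergraph V E \<and> r_uniform r E \<and> r_partite r V E \<and>
           (\<forall>i\<in>{1..n}. matching E (Ms i) \<and>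
              real (card (Ms i)) \<ge> real n + (1 / (12 * real r)) * real n powr ((real r - 1) / real r) - 1) \<and>
           \<not> (\<exists>M. rainbow_matching Ms n M \<and> card M = n)"
proof -
  obtain N L where "odd N" "n \<le> N" "N \<le> 2 ^ L" "8 * L * (N - n) + 1 < n"
    and size: "real N \<ge> real n + (1 / (12 * real r)) * real n powr ((real r - 1) / real r) - 1"
    using rainbow_parameters[OF assms] by blast
  define Ms where "Ms = (\<lambda>i. if i \<le> n - n div 2 then coord_matching r N (\<lambda>x _. x)
    else coord_matching r N (twist N))"
  have "\<not> (\<exists>M. rainbow_matching Ms n M \<and> card M = n)"
    using mult_half_compl_large[OF \<open>n \<le> N\<close> \<open>8 * L * (N - n) + 1 < n\<close>]
    by (intro no_rainbow_matching[OF assms(1) \<open>odd N\<close> \<open>N \<le> 2 ^ L\<close>, of "n - n div 2" "n div 2"])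
      (simp_all add: Ms_def)
  moreover define E where "E = coord_matching r N (\<lambda>x _. x) \<union> coord_matching r N (twist N)"
  note E = diagonal_twist_hypergraph[of r N, folded E_def]
  then have "matching E (Ms i) \<and> card (Ms i) = N" for i
    using assms(1) \<open>odd N\<close> by (simp add: Ms_def)
  ultimately show ?thesis
    using E(1) assms(1) \<open>odd N\<close> size
    by (intro exI[of _ "\<Union>j\<in>{1..r}. layer N j"] exI[of _ E] exI[of _ Ms]) simp
qed

end
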